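(* Let $(G,v)$ be an independent Hamel space over an ordered field $C$. Then for all $x_0,y_0,x_1,y_1\in G$ with $x_0<_0y_0$ and $x_1<_1y_1$ there is $z\in G$ such that $z\neq v(z)$, $x_0<_0z<_0y_0$ and $x_1<_1z<_1y_1$.
   Context: Let $C$ be an ordered field. A $2$-ordered $C$-vector space is a $C$-vector space $G$ with two total orderings $<_0,<_1$ such that $G$ is an ordered $C$-vector space with respect to each. Put $G_\infty=G\cup\{\infty\}$, with $G<_0\infty$, $G<_1\infty$. A Hamel valuation on $G$ is a map $v:G\to G_\infty$ such that for all $x,y\in G$ and $\lambda\in C^{\times}$: $v(x)=\infty$ iff $x=0$; $v(x+y)\ge_0\min_0(v(x),v(y))$; $v(\lambda x)=v(x)$; if $0<_1x<_1y$ then $v(x)\ge_0v(y)$; $v(v(x))=v(x)$ (with $v(\infty)=\infty$); and $v(x)>_10$. A Hamel space is such a pair $(G,v)$; it is independent if for all $a_0,b_0,a_1,b_1\in G\cup\{\pm\infty\}$ with $a_0<_0b_0$, $a_1<_1b_1$ there is $z\in G$ with $a_0<_0z<_0b_0$ and $a_1<_1z<_1b_1$. *)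

theory Defs
  imports Complex_Main
begin

text \<open>G_\<infinity> is modelled as \<open>'g option\<close>, with \<open>None\<close> playing the role of \<infinity>
  (the top element for both extended orderings).\<close>

definition ext_lt :: "('g \<Rightarrow> 'g \<Rightarrow> bool) \<Rightarrow> 'g option \<Rightarrow> 'g option \<Rightarrow> bool" where
  "ext_lt lt a b = (case (a, b) of
      (Some x, Some y) \<Rightarrow> lt x y
    | (Some _, None) \<Rightarrow> True
    | _ \<Rightarrow> False)"

definition ext_le :: "('g \<Rightarrow> 'g \<Rightarrow> bool) \<Rightarrow> 'g option \<Rightarrow> 'g option \<Rightarrow> bool" where
  "ext_le lt a b = (a = b \<or> ext_lt lt a b)"

definition ext_min :: "('g \<Rightarrow> 'g \<Rightarrow> bool) \<Rightarrow> 'g option \<Rightarrow> 'g option \<Rightarrow> 'g option" where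
  "ext_min lt a b = (if ext_le lt a b then a else b)"

definition ordered_vs :: "('c::linordered_field \<Rightarrow> 'g::ab_group_add \<Rightarrow> 'g) \<Rightarrow> ('g \<Rightarrow> 'g \<Rightarrow> bool) \<Rightarrow> bool" where
  "ordered_vs scale lt \<longleftrightarrow>
     (\<forall>x. \<not> lt x x) \<and>
     (\<forall>x y z. lt x y \<longrightarrow> lt y z \<longrightarrow> lt x z) \<and>
     (\<forall>x y. x \<noteq> y \<longrightarrow> lt x y \<or> lt y x) \<and>
     (\<forall>x y z. lt x y \<longrightarrow> lt (x + z) (y + z)) \<and>
     (\<forall>c x. 0 < c \<longrightarrow> lt 0 x \<longrightarrow> lt 0 (scale c x))"

definition two_ordered_vs :: "('c::linordered_field \<Rightarrow> 'g::ab_group_add \<Rightarrow> 'g) \<Rightarrow> ('g \<Rightarrow> 'g \<Rightarrow> bool) \<Rightarrow> ('g \<Rightarrow> 'g \<Rightarrow> bool) \<Rightarrow> bool" where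
  "two_ordered_vs scale lt0 lt1 \<longleftrightarrow>
     vector_space scale \<and> ordered_vs scale lt0 \<and> ordered_vs scale lt1"

definition hamel_valuation :: "('c::linordered_field \<Rightarrow> 'g::ab_group_add \<Rightarrow> 'g) \<Rightarrow> ('g \<Rightarrow> 'g \<Rightarrow> bool) \<Rightarrow> ('g \<Rightarrow> 'g \<Rightarrow> bool) \<Rightarrow> ('g \<Rightarrow> 'g option) \<Rightarrow> bool" where
  "hamel_valuation scale lt0 lt1 v \<longleftrightarrow>
     (\<forall>x. v x = None \<longleftrightarrow> x = 0) \<and>
     (\<forall>x y. ext_le lt0 (ext_min lt0 (v x) (v y)) (v (x + y))) \<and>
     (\<forall>c x. c \<noteq> 0 \<longrightarrow> v (scale c x) = v x) \<and>
     (\<forall>x y. lt1 0 x \<longrightarrow> lt1 x y \<longrightarrow> ext_le lt0 (v y) (v x)) \<and>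
     (\<forall>x. (case v x of None \<Rightarrow> True | Some y \<Rightarrow> v y = v x)) \<and>
     (\<forall>x. ext_lt lt1 (Some 0) (v x))"

definition hamel_space :: "('c::linordered_field \<Rightarrow> 'g::ab_group_add \<Rightarrow> 'g) \<Rightarrow> ('g \<Rightarrow> 'g \<Rightarrow> bool) \<Rightarrow> ('g \<Rightarrow> 'g \<Rightarrow> bool) \<Rightarrow> ('g \<Rightarrow> 'g option) \<Rightarrow> bool" where
  "hamel_space scale lt0 lt1 v \<longleftrightarrow>
     two_ordered_vs scale lt0 lt1 \<and> hamel_valuation scale lt0 lt1 v"

text \<open>Bounds in G \<union> {\<plusminus>\<infinity>}: a lower bound is \<open>'g option\<close> with \<open>None\<close> = -\<infinity>,
  an upper bound is \<open>'g option\<close> with \<open>None\<close> = +\<infinity>. (A lower bound +\<infinity> or an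
  upper bound -\<infinity> can never satisfy a <  b, so these are the only cases.)\<close>

definition bounds_ok :: "('g \<Rightarrow> 'g \<Rightarrow> bool) \<Rightarrow> 'g option \<Rightarrow> 'g option \<Rightarrow> bool" where
  "bounds_ok lt a b = (case (a, b) of (Some x, Some y) \<Rightarrow> lt x y | _ \<Rightarrow> True)"

definition in_interval :: "('g \<Rightarrow> 'g \<Rightarrow> bool) \<Rightarrow> 'g option \<Rightarrow> 'g option \<Rightarrow> 'g \<Rightarrow> bool" where
  "in_interval lt a b z =
     ((case a of None \<Rightarrow> True | Some x \<Rightarrow> lt x z) \<and> (case b of None \<Rightarrow> True | Some y \<Rightarrow> lt z y))"

definition independent_2ord :: "('g \<Rightarrow> 'g \<Rightarrow> bool) \<Rightarrow> ('g \<Rightarrow> 'g \<Rightarrow> bool) \<Rightarrow> bool" where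
  "independent_2ord lt0 lt1 \<longleftrightarrow>
     (\<forall>a0 b0 a1 b1. bounds_ok lt0 a0 b0 \<longrightarrow> bounds_ok lt1 a1 b1 \<longrightarrow>
        (\<exists>z. in_interval lt0 a0 b0 z \<and> in_interval lt1 a1 b1 z))"

end

theory Submission
  imports Defs
begin

text \<open>Fixed points of \<open>v\<close> are \<open><\<^sub>1\<close>-positive and \<open>v\<close> is antitone on \<open><\<^sub>1\<close>-positive
  elements, so for fixed points \<open>w <\<^sub>1 z\<close> forces \<open>z \<le>\<^sub>0 w\<close>. Hence if \<open>z\<close> lies in the given box and
  \<open>w\<close> lies in the box below \<open>z\<close> in both orderings (both exist by independence), \<open>z\<close> and \<open>w\<close>
  cannot both be fixed points.\<close>

lemma ordered_vs_asym:
  assumes "ordered_vs scale lt" "lt x y"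
  shows "\<not> lt y x"
  using assms unfolding ordered_vs_def by blast

lemma ordered_vs_trans:
  assumes "ordered_vs scale lt" "lt x y" "lt y z"
  shows "lt x z"
  using assms unfolding ordered_vs_def by blast

lemma independent_2ordD:
  assumes "independent_2ord lt0 lt1" "lt0 a0 b0" "lt1 a1 b1"
  obtains z where "lt0 a0 z" "lt0 z b0" "lt1 a1 z" "lt1 z b1"
proof -
  have "\<exists>z. in_interval lt0 (Some a0) (Some b0) z \<and> in_interval lt1 (Some a1) (Some b1) z"
    using assms unfolding independent_2ord_def bounds_ok_def by auto
  then show ?thesis
    using that by (auto simp: in_interval_def)
qed

lemma hamel_valuation_fixed_point_pos:
  assumes "hamel_valuation scale lt0 lt1 v" "v w = Some w"
  shows "lt1 0 w"
proof -
  have "ext_lt lt1 (Some 0) (v w)"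
    using assms(1) unfolding hamel_valuation_def by blast
  then show ?thesis
    using assms(2) by (simp add: ext_lt_def)
qed

lemma hamel_valuation_fixed_point_order_reversing:
  assumes v: "hamel_valuation scale lt0 lt1 v"
    and fixed: "v w = Some w" "v z = Some z"
    and "lt1 w z"
  shows "z = w \<or> lt0 z w"
proof -
  have "ext_le lt0 (v z) (v w)"
    using v hamel_valuation_fixed_point_pos[OF v fixed(1)] \<open>lt1 w z\<close>
    unfolding hamel_valuation_def by blast
  then show ?thesis
    using fixed by (simp add: ext_le_def ext_lt_def)
qed

theorem lemma4p2:
  fixes scale :: "'c::linordered_field \<Rightarrow> 'g::ab_group_add \<Rightarrow> 'g"
    and lt0 lt1 :: "'g \<Rightarrow> 'g \<Rightarrow> bool"
    and v :: "'g \<Rightarrow> 'g option"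
  assumes "hamel_space scale lt0 lt1 v"
    and "independent_2ord lt0 lt1"
    and "lt0 x0 y0" and "lt1 x1 y1"
  shows "\<exists>z. v z \<noteq> Some z \<and> lt0 x0 z \<and> lt0 z y0 \<and> lt1 x1 z \<and> lt1 z y1"
proof -
  have v: "hamel_valuation scale lt0 lt1 v"
    and o0: "ordered_vs scale lt0" and o1: "ordered_vs scale lt1"
    using assms(1) by (auto simp: hamel_space_def two_ordered_vs_def)
  obtain z where z: "lt0 x0 z" "lt0 z y0" "lt1 x1 z" "lt1 z y1"
    using independent_2ordD[OF assms(2-4)] .
  obtain w where w: "lt0 x0 w" "lt0 w z" "lt1 x1 w" "lt1 w z"
    using independent_2ordD[OF assms(2) z(1,3)] .
  have w_in_box: "lt0 w y0" "lt1 w y1"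
    using ordered_vs_trans[OF o0 w(2) z(2)] ordered_vs_trans[OF o1 w(4) z(4)] .
  have "v z \<noteq> Some z \<or> v w \<noteq> Some w"
    using hamel_valuation_fixed_point_order_reversing[OF v _ _ w(4)]
      ordered_vs_asym[OF o0 w(2)] w(2) by blast
  then show ?thesis
    using z w w_in_box by blast
qed

end
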